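(* Let $G_1,G_2,\dots$ be 3-symmetric graphs with $|G_i|\to\infty$, and let $H$ be a 3-symmetric graph with at least one vertex. Then as $i\to\infty$, \[t(K_3,\mathrm{Inflate}(G_i,H))\to\tfrac18,\quad t(P_3,\mathrm{Inflate}(G_i,H))\to\tfrac38,\quad t(K_2\cup K_1,\mathrm{Inflate}(G_i,H))\to\tfrac38,\quad t(\overline{K_3},\mathrm{Inflate}(G_i,H))\to\tfrac18.\]
   Context: All graphs are finite and simple; $|G|$ denotes the number of vertices. For a graph $G$ on $n$ vertices and a graph $F$ on $k$ vertices, the density $t(F,G)$ is the number of $k$-element subsets $S\subseteq V(G)$ whose induced subgraph is isomorphic to $F$, divided by $\binom{n}{k}$ (and $0$ if $n<k$). $K_3$ is the triangle, $P_3$ the path with 3 vertices and 2 edges, $K_2\cup K_1$ the 3-vertex graph with exactly one edge, and $\overline{K_3}$ the 3-vertex graph with no edges. A graph with at least 3 vertices is 3-symmetric if its densities of $K_3,P_3,K_2\cup K_1,\overline{K_3}$ are $1/8,3/8,3/8,1/8$ respectively; graphs with fewer than 3 vertices are considered trivially 3-symmetric. The inflation $\mathrm{Inflate}(G,H)$ (lexicographic product) is the graph with vertex set $V(G)\times V(H)$ in which $(g,h)$ and $(g',h')$ are adjacent iff either $g$ and $g'$ are adjacent in $G$, or $g=g'$ and $h,h'$ are adjacent in $H$. *)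

theory Defs
  imports Complex_Main
begin

type_synonym 'a graph = "'a set \<times> ('a \<Rightarrow> 'a \<Rightarrow> bool)"

definition simple_graph :: "'a graph \<Rightarrow> bool" where
  "simple_graph G \<longleftrightarrow> finite (fst G)
     \<and> (\<forall>x y. snd G x y \<longrightarrow> x \<in> fst G \<and> y \<in> fst G)
     \<and> (\<forall>x y. snd G x y \<longrightarrow> snd G y x)
     \<and> (\<forall>x. \<not> snd G x x)"

definition induced_iso :: "'a graph \<Rightarrow> 'a set \<Rightarrow> 'b graph \<Rightarrow> bool" where
  "induced_iso G S F \<longleftrightarrow> (\<exists>f. bij_betw f S (fst F) \<and>
      (\<forall>x\<in>S. \<forall>y\<in>S. snd G x y \<longleftrightarrow> snd F (f x) (f y)))"

definition density :: "'b graph \<Rightarrow> 'a graph \<Rightarrow> real" where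
  "density F G = (let k = card (fst F); n = card (fst G) in
     if n < k then 0
     else real (card {S. S \<subseteq> fst G \<and> card S = k \<and> induced_iso G S F}) / real (n choose k))"

definition K3 :: "nat graph" where
  "K3 = ({0,1,2}, \<lambda>x y. x \<in> {0,1,2} \<and> y \<in> {0,1,2} \<and> x \<noteq> y)"

definition P3 :: "nat graph" where
  "P3 = ({0,1,2}, \<lambda>x y. {x,y} = {0,1} \<or> {x,y} = {1,2})"

definition K2K1 :: "nat graph" where
  "K2K1 = ({0,1,2}, \<lambda>x y. {x,y} = {0,1})"

definition coK3 :: "nat graph" where
  "coK3 = ({0,1,2}, \<lambda>x y. False)"

definition three_symmetric :: "'a graph \<Rightarrow> bool" where
  "three_symmetric G \<longleftrightarrow> (card (fst G) \<ge> 3 \<longrightarrow>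
     density K3 G = 1/8 \<and> density P3 G = 3/8 \<and> density K2K1 G = 3/8 \<and> density coK3 G = 1/8)"

definition inflate :: "'a graph \<Rightarrow> 'b graph \<Rightarrow> ('a \<times> 'b) graph" where
  "inflate G H = (fst G \<times> fst H,
     \<lambda>(g,h) (g',h'). (g,h) \<in> fst G \<times> fst H \<and> (g',h') \<in> fst G \<times> fst H \<and>
        (snd G g g' \<or> (g = g' \<and> snd H h h')))"

end

theory Submission
  imports Defs "HOL-Library.FuncSet" "HOL-Real_Asymp.Real_Asymp"
begin

text \<open>Call a set of vertices of \<open>Inflate(G, H)\<close> transversal if its members lie in distinct
  blobs \<open>{g} \<times> V(H)\<close>. A transversal set induces the same graph as its projection to \<open>G\<close>, and
  every \<open>k\<close>-set of \<open>G\<close> is the projection of exactly \<open>|H|\<^sup>k\<close> transversal sets. So for any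
  \<open>k\<close>-vertex graph \<open>F\<close>, with \<open>n = |G|\<close>, \<open>m = |H|\<close> and \<open>r = C(n,k) m\<^sup>k / C(nm,k)\<close> the
  proportion of transversal \<open>k\<close>-sets,
  \<open>t(F,G) r \<le> t(F, Inflate(G,H)) \<le> t(F,G) r + (1 - r)\<close>.
  For \<open>k = 3\<close> and fixed \<open>m\<close> we have \<open>r \<rightarrow> 1\<close> as \<open>n \<rightarrow> \<infinity>\<close>, so the densities of
  \<open>Inflate(G\<^sub>i, H)\<close> converge to the common densities of the 3-symmetric \<open>G\<^sub>i\<close>.\<close>

lemma card_function_graphs:
  assumes "finite T"
  shows "card {S. S \<subseteq> T \<times> W \<and> inj_on fst S \<and> fst ` S = T} = card W ^ card T"
proof -
  let ?graph = "\<lambda>f. (\<lambda>t. (t, f t)) ` T"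
  have inj: "inj_on ?graph (T \<rightarrow>\<^sub>E W)"
  proof (rule inj_onI)
    fix f g assume f: "f \<in> T \<rightarrow>\<^sub>E W" and g: "g \<in> T \<rightarrow>\<^sub>E W" and eq: "?graph f = ?graph g"
    show "f = g"
    proof (rule PiE_ext[OF f g])
      fix t assume "t \<in> T"
      then have "(t, f t) \<in> ?graph g" using eq by blast
      then show "f t = g t" by auto
    qed
  qed
  have img: "?graph ` (T \<rightarrow>\<^sub>E W) = {S. S \<subseteq> T \<times> W \<and> inj_on fst S \<and> fst ` S = T}"
  proof (intro equalityI subsetI)
    fix S assume "S \<in> {S. S \<subseteq> T \<times> W \<and> inj_on fst S \<and> fst ` S = T}"
    then have S: "S \<subseteq> T \<times> W" "inj_on fst S" "fst ` S = T" by auto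
    have unique: "\<exists>!w. (t, w) \<in> S" if "t \<in> T" for t
      using S that by (force simp: inj_on_def)
    define f where "f = (\<lambda>t\<in>T. THE w. (t, w) \<in> S)"
    have f: "(t, f t) \<in> S" if "t \<in> T" for t
      using theI'[OF unique[OF that]] that by (simp add: f_def)
    have "f \<in> T \<rightarrow>\<^sub>E W" using f S(1) by (auto simp: f_def)
    moreover have "S = ?graph f"
    proof (intro equalityI subsetI)
      fix p assume "p \<in> S"
      then have "fst p \<in> T" using S(3) by blast
      moreover have "f (fst p) = snd p"
        using the1_equality[OF unique[OF \<open>fst p \<in> T\<close>], of "snd p"] \<open>p \<in> S\<close> \<open>fst p \<in> T\<close>
        by (simp add: f_def)
      then have "p = (fst p, f (fst p))" by simp
      then show "p \<in> ?graph f" using \<open>fst p \<in> T\<close> by (rule image_eqI)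
    next
      fix p assume "p \<in> ?graph f" then show "p \<in> S" using f by blast
    qed
    ultimately show "S \<in> ?graph ` (T \<rightarrow>\<^sub>E W)" by blast
  next
    fix S assume "S \<in> ?graph ` (T \<rightarrow>\<^sub>E W)"
    then obtain f where f: "f \<in> T \<rightarrow>\<^sub>E W" and S: "S = ?graph f" by blast
    have "S \<subseteq> T \<times> W" unfolding S using PiE_mem[OF f] by blast
    moreover have "inj_on fst S" unfolding S by (rule inj_onI) auto
    moreover have "fst ` S = T" unfolding S by (simp add: image_image)
    ultimately show "S \<in> {S. S \<subseteq> T \<times> W \<and> inj_on fst S \<and> fst ` S = T}" by blast
  qed
  have "card {S. S \<subseteq> T \<times> W \<and> inj_on fst S \<and> fst ` S = T} = card (T \<rightarrow>\<^sub>E W)"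
    using card_image[OF inj] unfolding img .
  then show ?thesis using assms by (simp add: card_PiE)
qed

lemma card_transversal_lifts:
  assumes "finite V" "finite W" and "\<And>T. T \<in> \<T> \<Longrightarrow> T \<subseteq> V \<and> card T = k"
  shows "card {S. S \<subseteq> V \<times> W \<and> inj_on fst S \<and> fst ` S \<in> \<T>} = card \<T> * card W ^ k"
proof -
  let ?lifts = "\<lambda>T. {S. S \<subseteq> T \<times> W \<and> inj_on fst S \<and> fst ` S = T}"
  have "\<T> \<subseteq> Pow V" using assms(3) by blast
  then have "finite \<T>" using assms(1) finite_subset by blast
  have lifts: "{S. S \<subseteq> V \<times> W \<and> inj_on fst S \<and> fst ` S \<in> \<T>} = (\<Union>T\<in>\<T>. ?lifts T)"
  proof (intro equalityI subsetI)
    fix S assume "S \<in> {S. S \<subseteq> V \<times> W \<and> inj_on fst S \<and> fst ` S \<in> \<T>}"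
    then have S: "S \<subseteq> V \<times> W" "inj_on fst S" "fst ` S \<in> \<T>" by auto
    have "S \<subseteq> fst ` S \<times> W" using S(1) by (auto intro: rev_image_eqI)
    then show "S \<in> (\<Union>T\<in>\<T>. ?lifts T)" using S by blast
  next
    fix S assume "S \<in> (\<Union>T\<in>\<T>. ?lifts T)"
    then obtain T where "T \<in> \<T>" "S \<subseteq> T \<times> W" "inj_on fst S" "fst ` S = T" by blast
    then show "S \<in> {S. S \<subseteq> V \<times> W \<and> inj_on fst S \<and> fst ` S \<in> \<T>}" using assms(3) by blast
  qed
  have finite_lifts: "finite (?lifts T)" if "T \<in> \<T>" for T
  proof -
    have "finite (T \<times> W)" using assms that finite_subset by blast
    moreover have "?lifts T \<subseteq> Pow (T \<times> W)" by blast
    ultimately show ?thesis using finite_subset by blast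
  qed
  have "card (\<Union>T\<in>\<T>. ?lifts T) = (\<Sum>T\<in>\<T>. card (?lifts T))"
    using \<open>finite \<T>\<close> finite_lifts by (intro card_UN_disjoint) auto
  also have "\<dots> = (\<Sum>T\<in>\<T>. card W ^ k)"
  proof (rule sum.cong)
    fix T assume "T \<in> \<T>"
    then have "finite T" "card T = k" using assms finite_subset by blast+
    then show "card (?lifts T) = card W ^ k" using card_function_graphs by blast
  qed simp
  finally show ?thesis using lifts by simp
qed

lemma card_transversal_subsets:
  assumes "finite V" "finite W"
  shows "card {S. S \<subseteq> V \<times> W \<and> card S = k \<and> inj_on fst S} = (card V choose k) * card W ^ k"
proof -
  have "{S. S \<subseteq> V \<times> W \<and> card S = k \<and> inj_on fst S}
      = {S. S \<subseteq> V \<times> W \<and> inj_on fst S \<and> fst ` S \<in> {T. T \<subseteq> V \<and> card T = k}}"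
    by (auto simp: card_image)
  then show ?thesis
    using card_transversal_lifts[OF assms, of "{T. T \<subseteq> V \<and> card T = k}" k]
    by (simp add: n_subsets[OF assms(1)])
qed

lemma induced_iso_bij_betw_transfer:
  assumes "bij_betw \<phi> S T" and "\<And>x y. x \<in> S \<Longrightarrow> y \<in> S \<Longrightarrow> snd G x y \<longleftrightarrow> snd G' (\<phi> x) (\<phi> y)"
    and "induced_iso G' T F"
  shows "induced_iso G S F"
proof -
  obtain g where g: "bij_betw g T (fst F)" and adj: "\<forall>x\<in>T. \<forall>y\<in>T. snd G' x y \<longleftrightarrow> snd F (g x) (g y)"
    using assms(3) unfolding induced_iso_def by blast
  have "bij_betw (g \<circ> \<phi>) S (fst F)" using assms(1) g by (rule bij_betw_trans)
  moreover have "\<forall>x\<in>S. \<forall>y\<in>S. snd G x y \<longleftrightarrow> snd F ((g \<circ> \<phi>) x) ((g \<circ> \<phi>) y)"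
    using assms(2) adj bij_betw_apply[OF assms(1)] by simp
  ultimately show ?thesis unfolding induced_iso_def by blast
qed

lemma induced_iso_bij_betw_iff:
  assumes "bij_betw \<phi> S T" and "\<And>x y. x \<in> S \<Longrightarrow> y \<in> S \<Longrightarrow> snd G x y \<longleftrightarrow> snd G' (\<phi> x) (\<phi> y)"
  shows "induced_iso G S F \<longleftrightarrow> induced_iso G' T F"
proof
  assume "induced_iso G S F"
  let ?\<psi> = "inv_into S \<phi>"
  have adj_inv: "snd G' a b \<longleftrightarrow> snd G (?\<psi> a) (?\<psi> b)" if "a \<in> T" "b \<in> T" for a b
    using assms(2)[of "?\<psi> a" "?\<psi> b"] that assms(1)
    by (simp add: bij_betw_inv_into_right bij_betw_apply[OF bij_betw_inv_into])
  show "induced_iso G' T F"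
    by (rule induced_iso_bij_betw_transfer[OF bij_betw_inv_into[OF assms(1)] adj_inv \<open>induced_iso G S F\<close>])
next
  assume "induced_iso G' T F"
  with assms show "induced_iso G S F" by (rule induced_iso_bij_betw_transfer)
qed

lemma fst_inflate [simp]: "fst (inflate G H) = fst G \<times> fst H"
  by (simp add: inflate_def)

lemma inflate_adj_transversal:
  assumes "simple_graph G" "simple_graph H" "inj_on fst S" "S \<subseteq> fst G \<times> fst H" "x \<in> S" "y \<in> S"
  shows "snd (inflate G H) x y \<longleftrightarrow> snd G (fst x) (fst y)"
proof (cases "x = y")
  case True
  then show ?thesis using assms(1,2) by (auto simp: simple_graph_def inflate_def split: prod.splits)
next
  case False
  then have "fst x \<noteq> fst y" using assms(3,5,6) by (auto simp: inj_on_def)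
  then show ?thesis using assms(4-6) by (auto simp: inflate_def split: prod.splits)
qed

definition induced_copies :: "'b graph \<Rightarrow> 'a graph \<Rightarrow> 'a set set" where
  "induced_copies F G = {S. S \<subseteq> fst G \<and> card S = card (fst F) \<and> induced_iso G S F}"

lemma density_eq_card_induced_copies:
  assumes "card (fst F) \<le> card (fst G)"
  shows "density F G = real (card (induced_copies F G)) / real (card (fst G) choose card (fst F))"
  using assms by (simp add: density_def induced_copies_def Let_def)

lemma transversal_induced_copies_inflate:
  assumes "simple_graph G" "simple_graph H"
  shows "{S \<in> induced_copies F (inflate G H). inj_on fst S}
    = {S. S \<subseteq> fst G \<times> fst H \<and> inj_on fst S \<and> fst ` S \<in> induced_copies F G}"
proof -
  have copy_iff: "S \<in> induced_copies F (inflate G H) \<longleftrightarrow> fst ` S \<in> induced_copies F G"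
    if "S \<subseteq> fst G \<times> fst H" "inj_on fst S" for S
  proof -
    have "induced_iso (inflate G H) S F \<longleftrightarrow> induced_iso G (fst ` S) F"
      using inj_on_imp_bij_betw[OF that(2)] inflate_adj_transversal[OF assms that(2,1)]
      by (rule induced_iso_bij_betw_iff)
    moreover have "card (fst ` S) = card S" using that(2) by (rule card_image)
    moreover have "fst ` S \<subseteq> fst G" using that(1) by auto
    ultimately show ?thesis using that(1) by (simp add: induced_copies_def)
  qed
  show ?thesis
  proof (intro equalityI subsetI)
    fix S assume S: "S \<in> {S \<in> induced_copies F (inflate G H). inj_on fst S}"
    then have "S \<subseteq> fst G \<times> fst H" by (simp add: induced_copies_def)
    with S copy_iff show "S \<in> {S. S \<subseteq> fst G \<times> fst H \<and> inj_on fst S \<and> fst ` S \<in> induced_copies F G}"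
      by blast
  next
    fix S assume "S \<in> {S. S \<subseteq> fst G \<times> fst H \<and> inj_on fst S \<and> fst ` S \<in> induced_copies F G}"
    with copy_iff show "S \<in> {S \<in> induced_copies F (inflate G H). inj_on fst S}" by blast
  qed
qed

lemma card_induced_copies_inflate_bounds:
  fixes F :: "'c graph" and G :: "'a graph" and H :: "'b graph"
  assumes G: "simple_graph G" and H: "simple_graph H"
  defines "k \<equiv> card (fst F)" and "n \<equiv> card (fst G)" and "m \<equiv> card (fst H)"
    and "c \<equiv> card (induced_copies F G)"
  shows "c * m ^ k \<le> card (induced_copies F (inflate G H))"
    and "card (induced_copies F (inflate G H)) + (n choose k) * m ^ k \<le> c * m ^ k + (n * m choose k)"
proof -
  have "finite (fst G)" "finite (fst H)" using G H by (simp_all add: simple_graph_def)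
  then have "finite (fst G \<times> fst H)" by simp
  define A where "A = induced_copies F (inflate G H)"
  define A\<^sub>t\<^sub>r where "A\<^sub>t\<^sub>r = {S \<in> A. inj_on fst S}"
  define K where "K = {S. S \<subseteq> fst G \<times> fst H \<and> card S = k}"
  define K\<^sub>t\<^sub>r where "K\<^sub>t\<^sub>r = {S. S \<subseteq> fst G \<times> fst H \<and> card S = k \<and> inj_on fst S}"
  have "card A\<^sub>t\<^sub>r = c * m ^ k"
    unfolding A\<^sub>t\<^sub>r_def A_def transversal_induced_copies_inflate[OF G H] c_def m_def
    using card_transversal_lifts[OF \<open>finite (fst G)\<close> \<open>finite (fst H)\<close>, of "induced_copies F G" k]
    by (simp add: k_def induced_copies_def)
  have "card K\<^sub>t\<^sub>r = (n choose k) * m ^ k"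
    unfolding K\<^sub>t\<^sub>r_def n_def m_def
    using \<open>finite (fst G)\<close> \<open>finite (fst H)\<close> by (rule card_transversal_subsets)
  have "card K = (n * m choose k)"
    using n_subsets[OF \<open>finite (fst G \<times> fst H)\<close>, of k]
    by (simp add: K_def card_cartesian_product n_def m_def)
  have "finite K" using \<open>finite (fst G \<times> fst H)\<close> by (simp add: K_def)
  have "A \<subseteq> K" by (auto simp: A_def K_def induced_copies_def k_def)
  then have "finite A" using \<open>finite K\<close> by (rule finite_subset)
  have "K\<^sub>t\<^sub>r \<subseteq> K" "A\<^sub>t\<^sub>r \<subseteq> A" by (auto simp: K\<^sub>t\<^sub>r_def K_def A\<^sub>t\<^sub>r_def)
  have "A - A\<^sub>t\<^sub>r \<subseteq> K - K\<^sub>t\<^sub>r" using \<open>A \<subseteq> K\<close> by (auto simp: A\<^sub>t\<^sub>r_def K\<^sub>t\<^sub>r_def K_def)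
  then have "card (A - A\<^sub>t\<^sub>r) \<le> card (K - K\<^sub>t\<^sub>r)" using \<open>finite K\<close> by (simp add: card_mono)
  moreover have "card (K - K\<^sub>t\<^sub>r) = card K - card K\<^sub>t\<^sub>r"
    using \<open>K\<^sub>t\<^sub>r \<subseteq> K\<close> \<open>finite K\<close> by (simp add: card_Diff_subset finite_subset)
  moreover have "card (A - A\<^sub>t\<^sub>r) = card A - card A\<^sub>t\<^sub>r"
    using \<open>A\<^sub>t\<^sub>r \<subseteq> A\<close> \<open>finite A\<close> by (simp add: card_Diff_subset finite_subset)
  moreover have "card A\<^sub>t\<^sub>r \<le> card A" using \<open>finite A\<close> \<open>A\<^sub>t\<^sub>r \<subseteq> A\<close> by (rule card_mono)
  moreover have "card K\<^sub>t\<^sub>r \<le> card K" using \<open>finite K\<close> \<open>K\<^sub>t\<^sub>r \<subseteq> K\<close> by (rule card_mono)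
  ultimately show "c * m ^ k \<le> card (induced_copies F (inflate G H))"
    and "card (induced_copies F (inflate G H)) + (n choose k) * m ^ k \<le> c * m ^ k + (n * m choose k)"
    using \<open>card A\<^sub>t\<^sub>r = _\<close> \<open>card K\<^sub>t\<^sub>r = _\<close> \<open>card K = _\<close> unfolding A_def by linarith+
qed

lemma density_inflate_bounds:
  assumes G: "simple_graph G" and H: "simple_graph H" and "fst H \<noteq> {}"
    and "card (fst F) \<le> card (fst G)"
  defines "r \<equiv> real ((card (fst G) choose card (fst F)) * card (fst H) ^ card (fst F))
      / real (card (fst G) * card (fst H) choose card (fst F))"
  shows "density F G * r \<le> density F (inflate G H)"
    and "density F (inflate G H) \<le> density F G * r + (1 - r)"
proof -
  define k n m where "k = card (fst F)" and "n = card (fst G)" and "m = card (fst H)"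
  define c a where "c = card (induced_copies F G)" and "a = card (induced_copies F (inflate G H))"
  define N where "N = real (n * m choose k)"
  have "m \<ge> 1" using H \<open>fst H \<noteq> {}\<close> by (simp add: m_def simple_graph_def Suc_le_eq card_gt_0_iff)
  then have "n \<le> n * m" by simp
  then have "k \<le> n * m" using assms(4) unfolding k_def n_def by linarith
  then have "N > 0" by (simp add: N_def)
  have "real (n choose k) > 0" using assms(4) by (simp add: k_def n_def)
  have r: "r = real ((n choose k) * m ^ k) / N"
    by (simp add: r_def N_def k_def n_def m_def)
  have dG: "density F G * r = real (c * m ^ k) / N"
    using \<open>real (n choose k) > 0\<close> assms(4) unfolding r
    by (simp add: density_eq_card_induced_copies c_def k_def n_def m_def)
  have dI: "density F (inflate G H) = real a / N"
    using \<open>k \<le> n * m\<close> density_eq_card_induced_copies[of F "inflate G H"]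
    by (simp add: N_def a_def k_def n_def m_def card_cartesian_product)
  have lower: "c * m ^ k \<le> a" and upper: "a + (n choose k) * m ^ k \<le> c * m ^ k + (n * m choose k)"
    using card_induced_copies_inflate_bounds[OF G H, of F] by (simp_all add: a_def c_def k_def n_def m_def)
  show "density F G * r \<le> density F (inflate G H)"
    unfolding dG dI using lower \<open>N > 0\<close> by (intro divide_right_mono) (simp_all only: of_nat_le_iff)
  have "real (a + (n choose k) * m ^ k) \<le> real (c * m ^ k + (n * m choose k))"
    using upper by (rule of_nat_mono)
  then have "real a \<le> real (c * m ^ k) + N - real ((n choose k) * m ^ k)"
    unfolding N_def of_nat_add by linarith
  then have "real a / N \<le> (real (c * m ^ k) + N - real ((n choose k) * m ^ k)) / N"
    using \<open>N > 0\<close> by (simp add: divide_right_mono)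
  also have "\<dots> = density F G * r + (1 - r)"
    using \<open>N > 0\<close> unfolding dG unfolding r by (simp add: add_divide_distrib diff_divide_distrib)
  finally show "density F (inflate G H) \<le> density F G * r + (1 - r)"
    unfolding dI .
qed

lemma real_choose_three: "real (k choose 3) = real k * (real k - 1) * (real k - 2) / 6"
proof (induction k)
  case (Suc k)
  have "Suc k choose 3 = (k choose 2) + (k choose 3)"
    by (simp add: numeral_3_eq_3 numeral_2_eq_2)
  moreover have "real (k choose 2) = real k * (real k - 1) / 2"
    by (induction k) (simp_all add: numeral_2_eq_2 field_simps)
  ultimately show ?case using Suc by (simp add: field_simps)
qed simp

lemma transversal_fraction_tendsto_one:
  fixes a :: "nat \<Rightarrow> nat"
  assumes "filterlim a at_top sequentially" and "m > 0"
  shows "(\<lambda>i. real ((a i choose 3) * m ^ 3) / real (a i * m choose 3)) \<longlonglongrightarrow> 1"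
proof -
  define M where "M = real m"
  have "M > 0" using assms(2) by (simp add: M_def)
  have cancel: "M * M * M * (inverse M * inverse M * inverse M) = 1"
    using \<open>M > 0\<close> by (simp add: field_simps)
  have "((\<lambda>x. x * (x - 1) * (x - 2) * M ^ 3 / (x * M * (x * M - 1) * (x * M - 2))) \<longlongrightarrow> 1) at_top"
    using \<open>M > 0\<close> by (real_asymp simp: power3_eq_cube cancel)
  moreover have "filterlim (\<lambda>i. real (a i)) at_top sequentially"
    using filterlim_real_sequentially assms(1) by (rule filterlim_compose)
  ultimately have "((\<lambda>i. real (a i) * (real (a i) - 1) * (real (a i) - 2) * M ^ 3
      / (real (a i) * M * (real (a i) * M - 1) * (real (a i) * M - 2))) \<longlongrightarrow> 1) sequentially"
    by (rule filterlim_compose)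
  then show ?thesis by (simp add: real_choose_three M_def)
qed

lemma density_inflate_tendsto:
  assumes "\<And>i. simple_graph (Gs i)" and "filterlim (\<lambda>i. card (fst (Gs i))) at_top sequentially"
    and "simple_graph H" and "fst H \<noteq> {}" and "card (fst F) = 3"
    and "\<forall>\<^sub>F i in sequentially. density F (Gs i) = d"
  shows "(\<lambda>i. density F (inflate (Gs i) H)) \<longlonglongrightarrow> d"
proof -
  define r where "r i = real ((card (fst (Gs i)) choose 3) * card (fst H) ^ 3)
      / real (card (fst (Gs i)) * card (fst H) choose 3)" for i
  have "card (fst H) > 0" using assms(3,4) by (simp add: simple_graph_def card_gt_0_iff)
  with assms(2) have "r \<longlonglongrightarrow> 1" unfolding r_def by (rule transversal_fraction_tendsto_one)
  have "\<forall>\<^sub>F i in sequentially. 3 \<le> card (fst (Gs i))"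
    using assms(2) by (simp add: filterlim_at_top)
  with assms(6) have "\<forall>\<^sub>F i in sequentially. d * r i \<le> density F (inflate (Gs i) H)
      \<and> density F (inflate (Gs i) H) \<le> d * r i + (1 - r i)"
  proof eventually_elim
    case (elim i)
    then show ?case
      using density_inflate_bounds[OF assms(1,3,4), of F i] assms(5) by (simp add: r_def)
  qed
  then have "\<forall>\<^sub>F i in sequentially. d * r i \<le> density F (inflate (Gs i) H)"
    and "\<forall>\<^sub>F i in sequentially. density F (inflate (Gs i) H) \<le> d * r i + (1 - r i)"
    by (simp_all add: eventually_conj_iff)
  moreover have "(\<lambda>i. d * r i) \<longlonglongrightarrow> d"
    using tendsto_mult[OF tendsto_const \<open>r \<longlonglongrightarrow> 1\<close>, of d] by simp
  moreover have "(\<lambda>i. d * r i + (1 - r i)) \<longlonglongrightarrow> d"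
    using tendsto_add[OF \<open>(\<lambda>i. d * r i) \<longlonglongrightarrow> d\<close> tendsto_diff[OF tendsto_const \<open>r \<longlonglongrightarrow> 1\<close>, of 1]]
    by simp
  ultimately show ?thesis by (rule tendsto_sandwich)
qed

theorem mainTheorem18:
  fixes Gs :: "nat \<Rightarrow> nat graph" and H :: "'b graph"
  assumes "\<And>i. simple_graph (Gs i)"
    and "\<And>i. three_symmetric (Gs i)"
    and "filterlim (\<lambda>i. card (fst (Gs i))) at_top sequentially"
    and "simple_graph H" and "three_symmetric H" and "fst H \<noteq> {}"
  shows "(\<lambda>i. density K3 (inflate (Gs i) H)) \<longlonglongrightarrow> 1/8
    \<and> (\<lambda>i. density P3 (inflate (Gs i) H)) \<longlonglongrightarrow> 3/8
    \<and> (\<lambda>i. density K2K1 (inflate (Gs i) H)) \<longlonglongrightarrow> 3/8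
    \<and> (\<lambda>i. density coK3 (inflate (Gs i) H)) \<longlonglongrightarrow> 1/8"
proof -
  have "\<forall>\<^sub>F i in sequentially. 3 \<le> card (fst (Gs i))"
    using assms(3) by (simp add: filterlim_at_top)
  then have densities: "\<forall>\<^sub>F i in sequentially. density K3 (Gs i) = 1/8 \<and> density P3 (Gs i) = 3/8
      \<and> density K2K1 (Gs i) = 3/8 \<and> density coK3 (Gs i) = 1/8"
    by (rule eventually_mono) (use assms(2) in \<open>simp add: three_symmetric_def\<close>)
  show ?thesis
  proof (intro conjI density_inflate_tendsto[OF assms(1,3,4,6)])
    show "card (fst K3) = 3" "card (fst P3) = 3" "card (fst K2K1) = 3" "card (fst coK3) = 3"
      by (simp_all add: K3_def P3_def K2K1_def coK3_def)
    show "\<forall>\<^sub>F i in sequentially. density K3 (Gs i) = 1/8"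
      and "\<forall>\<^sub>F i in sequentially. density P3 (Gs i) = 3/8"
      and "\<forall>\<^sub>F i in sequentially. density K2K1 (Gs i) = 3/8"
      and "\<forall>\<^sub>F i in sequentially. density coK3 (Gs i) = 1/8"
      using densities by (auto elim: eventually_mono)
  qed
qed

end
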